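(* Let $b\ge 1$ be an integer and let $c\in\mathbb{R}$ be a fixed critical value (depending only on $b$, not on $l$). For each integer $l\ge 1$ let $D_1(l),\dots,D_b(l)$ be real random variables on a probability space with probability measure $\mathbb{P}$, where $\mathbb{P}$ is the distribution under which the null hypothesis $H_{0j}$ for the fixed candidate feature $f_j$ holds. Assume: (A1) almost surely, $D_i(l+1)\le D_i(l)$ for all $i\in\{1,\dots,b\}$ and all $l\ge 1$; (A2) almost surely, for every $l$, all $D_i(l)$ are nonzero and the absolute values $|D_1(l)|,\dots,|D_b(l)|$ are pairwise distinct. Let $T^+(l)=\sum_{i=1}^b R_i(l)\,\mathbf{1}\{D_i(l)>0\}$, where $R_i(l)$ is the rank of $|D_i(l)|$ among $\{|D_1(l)|,\dots,|D_b(l)|\}$ (rank $1$ for the smallest). Define the Type I error $\alpha_j(l)=\mathbb{P}\big(T^+(l)\ge c\big)$. Then for every $l\ge 1$, \[\alpha_j(l+1)\le \alpha_j(l).\]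
   Context: Setting: a response $Y$ and candidate features $f_1,\dots,f_p$; the data are augmented with $l$ synthetic noise features $\varepsilon_1,\dots,\varepsilon_l$ drawn i.i.d. from a fixed distribution. For bootstrap replicate $i=1,\dots,b$, $I^{(i)}_j(l)$ is the importance score of $f_j$ and $I^{(i)}(\varepsilon_k;l)$ that of the $k$-th noise feature when $l$ noise features are included; $M^{(i)}(l)=\max_{1\le k\le l} I^{(i)}(\varepsilon_k;l)$ and $D_i(l)=I^{(i)}_j(l)-M^{(i)}(l)$. $T^+(l)$ is the one-sided Wilcoxon signed-rank statistic computed from $\{D_i(l)\}_{i=1}^b$, and the test rejects $H_{0j}: Y\perp\!\!\!\perp f_j$ when $T^+(l)\ge c$, with $c=c_\alpha(b)$ the Wilcoxon critical value at level $\alpha$. *)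

theory Defs
  imports "HOL-Probability.Probability"
begin

definition abs_rank :: "nat \<Rightarrow> (nat \<Rightarrow> real) \<Rightarrow> nat \<Rightarrow> nat" where
  "abs_rank b d i = card {k \<in> {1..b}. \<bar>d k\<bar> \<le> \<bar>d i\<bar>}"

definition wilcoxon_Tplus :: "nat \<Rightarrow> (nat \<Rightarrow> real) \<Rightarrow> real" where
  "wilcoxon_Tplus b d = (\<Sum>i=1..b. real (abs_rank b d i) * (if d i > 0 then 1 else 0))"

end

theory Submission
  imports Defs
begin

text \<open>For a sample without zeros and ties in absolute value, twice the signed-rank statistic
  equals the number of ordered pairs (i, k) with positive Walsh sum d i + d k plus the number
  of positive observations. Each of these counts is monotone in every observation, so
  T+ decreases when all D i decrease, as they do almost surely from l to l + 1; hence the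
  rejection event at l + 1 is almost surely contained in the one at l.\<close>

definition no_ties :: "nat \<Rightarrow> (nat \<Rightarrow> real) \<Rightarrow> bool" where
  "no_ties b d \<longleftrightarrow> (\<forall>i\<in>{1..b}. d i \<noteq> 0) \<and>
     (\<forall>i\<in>{1..b}. \<forall>k\<in>{1..b}. i \<noteq> k \<longrightarrow> \<bar>d i\<bar> \<noteq> \<bar>d k\<bar>)"

lemma wilcoxon_Tplus_eq_pair_count:
  "wilcoxon_Tplus b d = (\<Sum>i=1..b. \<Sum>k=1..b. of_bool (0 < d i \<and> \<bar>d k\<bar> \<le> \<bar>d i\<bar>))"
  unfolding wilcoxon_Tplus_def abs_rank_def
proof (rule sum.cong[OF refl])
  fix i
  have "real (card {k \<in> {1..b}. \<bar>d k\<bar> \<le> \<bar>d i\<bar>}) = (\<Sum>k=1..b. of_bool (\<bar>d k\<bar> \<le> \<bar>d i\<bar>))"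
    by (simp add: Int_def)
  then show "real (card {k \<in> {1..b}. \<bar>d k\<bar> \<le> \<bar>d i\<bar>}) * (if 0 < d i then 1 else 0)
      = (\<Sum>k=1..b. of_bool (0 < d i \<and> \<bar>d k\<bar> \<le> \<bar>d i\<bar>))"
    by (simp add: sum_distrib_right)
qed

lemma wilcoxon_Tplus_walsh:
  assumes "no_ties b d"
  shows "2 * wilcoxon_Tplus b d
           = (\<Sum>i=1..b. \<Sum>k=1..b. of_bool (0 < d i + d k)) + (\<Sum>i=1..b. of_bool (0 < d i))"
proof -
  let ?g = "\<lambda>i k. of_bool (0 < d i \<and> \<bar>d k\<bar> \<le> \<bar>d i\<bar>) :: real"
  have pair: "?g i k + ?g k i = of_bool (0 < d i + d k) + (if i = k then of_bool (0 < d i) else 0)"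
    if "i \<in> {1..b}" "k \<in> {1..b}" for i k
  proof (cases "i = k")
    case False
    \<comment> \<open>of two observations with distinct absolute values, the larger one fixes the sign of the sum\<close>
    then have "\<bar>d i\<bar> \<noteq> \<bar>d k\<bar>" "d i \<noteq> 0" "d k \<noteq> 0"
      using assms that unfolding no_ties_def by auto
    with False show ?thesis by auto
  qed simp
  have "2 * wilcoxon_Tplus b d = (\<Sum>i=1..b. \<Sum>k=1..b. ?g i k + ?g k i)"
    unfolding wilcoxon_Tplus_eq_pair_count mult_2 sum.distrib
    by (subst (2) sum.swap) (rule refl)
  also have "\<dots> = (\<Sum>i=1..b. (\<Sum>k=1..b. of_bool (0 < d i + d k)) + of_bool (0 < d i))"
    by (intro sum.cong refl) (simp add: pair sum.distrib)
  finally show ?thesis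
    by (simp only: sum.distrib)
qed

lemma wilcoxon_Tplus_mono:
  assumes "no_ties b d" "no_ties b e" and le: "\<And>i. i \<in> {1..b} \<Longrightarrow> e i \<le> d i"
  shows "wilcoxon_Tplus b e \<le> wilcoxon_Tplus b d"
proof -
  have walsh_le: "of_bool (0 < e i + e k) \<le> (of_bool (0 < d i + d k) :: real)"
    if "i \<in> {1..b}" "k \<in> {1..b}" for i k
    using le[OF that(1)] le[OF that(2)] by simp
  have pos_le: "of_bool (0 < e i) \<le> (of_bool (0 < d i) :: real)" if "i \<in> {1..b}" for i
    using le[OF that] by simp
  have "(\<Sum>i=1..b. \<Sum>k=1..b. of_bool (0 < e i + e k)) \<le> (\<Sum>i=1..b. \<Sum>k=1..b. of_bool (0 < d i + d k) :: real)"
    using walsh_le by (intro sum_mono)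
  moreover have "(\<Sum>i=1..b. of_bool (0 < e i)) \<le> (\<Sum>i=1..b. of_bool (0 < d i) :: real)"
    using pos_le by (intro sum_mono)
  ultimately show ?thesis
    using wilcoxon_Tplus_walsh[OF assms(1)] wilcoxon_Tplus_walsh[OF assms(2)] by linarith
qed

lemma borel_measurable_wilcoxon_Tplus:
  assumes "\<And>i. i \<in> {1..b} \<Longrightarrow> X i \<in> borel_measurable M"
  shows "(\<lambda>\<omega>. wilcoxon_Tplus b (\<lambda>i. X i \<omega>)) \<in> borel_measurable M"
  unfolding wilcoxon_Tplus_eq_pair_count
proof (intro borel_measurable_sum)
  fix i k assume "i \<in> {1..b}" "k \<in> {1..b}"
  then have [measurable]: "X i \<in> borel_measurable M" "X k \<in> borel_measurable M"
    using assms by auto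
  show "(\<lambda>\<omega>. of_bool (0 < X i \<omega> \<and> \<bar>X k \<omega>\<bar> \<le> \<bar>X i \<omega>\<bar>) :: real) \<in> borel_measurable M"
    by measurable
qed

theorem proposition5p1:
  fixes M :: "'a measure" and b :: nat and c :: real
    and D :: "nat \<Rightarrow> nat \<Rightarrow> 'a \<Rightarrow> real"
  assumes "prob_space M"
    and "b \<ge> 1"
    and meas: "\<And>l i. l \<ge> 1 \<Longrightarrow> i \<in> {1..b} \<Longrightarrow> D l i \<in> borel_measurable M"
    and A1: "AE \<omega> in M. \<forall>l\<ge>1. \<forall>i\<in>{1..b}. D (Suc l) i \<omega> \<le> D l i \<omega>"
    and A2: "AE \<omega> in M. \<forall>l\<ge>1. (\<forall>i\<in>{1..b}. D l i \<omega> \<noteq> 0) \<and>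
                 (\<forall>i\<in>{1..b}. \<forall>k\<in>{1..b}. i \<noteq> k \<longrightarrow> \<bar>D l i \<omega>\<bar> \<noteq> \<bar>D l k \<omega>\<bar>)"
    and "l \<ge> 1"
  shows "measure M {\<omega> \<in> space M. wilcoxon_Tplus b (\<lambda>i. D (Suc l) i \<omega>) \<ge> c}
         \<le> measure M {\<omega> \<in> space M. wilcoxon_Tplus b (\<lambda>i. D l i \<omega>) \<ge> c}"
proof -
  interpret prob_space M by fact
  have "(\<lambda>\<omega>. wilcoxon_Tplus b (\<lambda>i. D l i \<omega>)) \<in> borel_measurable M"
    using meas \<open>l \<ge> 1\<close> by (intro borel_measurable_wilcoxon_Tplus) auto
  then have event_sets: "{\<omega> \<in> space M. wilcoxon_Tplus b (\<lambda>i. D l i \<omega>) \<ge> c} \<in> sets M"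
    by measurable
  have "AE \<omega> in M. wilcoxon_Tplus b (\<lambda>i. D (Suc l) i \<omega>) \<le> wilcoxon_Tplus b (\<lambda>i. D l i \<omega>)"
    using A1 A2
  proof eventually_elim
    case (elim \<omega>)
    then show ?case
      using \<open>l \<ge> 1\<close> by (intro wilcoxon_Tplus_mono) (auto simp: no_ties_def)
  qed
  then show ?thesis
    by (intro finite_measure_mono_AE[OF _ event_sets]) auto
qed

end
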